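(* Let $\Gamma$ be a simply connected closed surface approximated by a triangular mesh with $N$ edges, $N_S$ triangles and $N_L$ vertices, and let $\mathsf{\Sigma}$, $\mathsf{\Lambda}$, $\mathsf{G}$, $\mathsf{G}_p$, $\mathsf{G}_\lambda$, $\mathbb{G}$, $\mathbb{G}_{\tilde p}$, $\mathbb{G}_{\tilde\lambda}$ be as in the context. Define the normalized Loop and Star matrices $\tilde{\mathsf{\Sigma}}=\mathsf{G}^{-1/2}\mathsf{\Sigma}\mathsf{G}_p^{1/2}$, $\tilde{\mathsf{\Lambda}}=\mathsf{G}^{1/2}\mathsf{\Lambda}\mathsf{G}_\lambda^{-1/2}$ and the dually-normalized ones $\tilde{\mathbb{\Sigma}}=\mathbb{G}^{1/2}\mathsf{\Sigma}\mathbb{G}_{\tilde\lambda}^{-1/2}$, $\tilde{\mathbb{\Lambda}}=\mathbb{G}^{-1/2}\mathsf{\Lambda}\mathbb{G}_{\tilde p}^{1/2}$, and the projectors $\tilde{\mathsf{P}}^\Sigma=\tilde{\mathsf{\Sigma}}(\tilde{\mathsf{\Sigma}}^{\mathrm T}\tilde{\mathsf{\Sigma}})^+\tilde{\mathsf{\Sigma}}^{\mathrm T}$, $\tilde{\mathsf{P}}^\Lambda=\tilde{\mathsf{\Lambda}}(\tilde{\mathsf{\Lambda}}^{\mathrm T}\tilde{\mathsf{\Lambda}})^+\tilde{\mathsf{\Lambda}}^{\mathrm T}$, $\tilde{\mathbb{P}}^\Sigma=\tilde{\mathbb{\Sigma}}(\tilde{\mathbb{\Sigma}}^{\mathrm T}\tilde{\mathbb{\Sigma}})^+\tilde{\mathbb{\Sigma}}^{\mathrm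 T}$, $\tilde{\mathbb{P}}^\Lambda=\tilde{\mathbb{\Lambda}}(\tilde{\mathbb{\Lambda}}^{\mathrm T}\tilde{\mathbb{\Lambda}})^+\tilde{\mathbb{\Lambda}}^{\mathrm T}$. Then $$\tilde{\mathsf{P}}^\Lambda+\tilde{\mathsf{P}}^\Sigma=\mathsf{I}\qquad\text{and}\qquad \tilde{\mathbb{P}}^\Lambda+\tilde{\mathbb{P}}^\Sigma=\mathsf{I},$$ where $\mathsf{I}$ is the $N\times N$ identity.
   Context: Each edge $m$ of the mesh is shared by two triangles $c_m^+$, $c_m^-$. The Star-to-RWG matrix $\mathsf{\Sigma}\in\mathbb{R}^{N\times N_S}$ has $[\mathsf{\Sigma}]_{mn}=1$ if cell $n$ is $c_m^+$, $-1$ if cell $n$ is $c_m^-$, $0$ otherwise. The Loop-to-RWG matrix $\mathsf{\Lambda}\in\mathbb{R}^{N\times N_L}$ has $[\mathsf{\Lambda}]_{mn}=\pm1$ when vertex $n$ is an endpoint of edge $m$ (opposite signs for the two endpoints, fixed by the orientation convention of the RWG functions), $0$ otherwise; with this convention $\mathsf{\Sigma}^{\mathrm T}\mathsf{\Lambda}=\mathsf{0}$, and $\mathsf{\Sigma}\vec{s}+\mathsf{\Lambda}\vec{l}$ spans $\mathbb{R}^N$ on a simply connected closed surface (the discrete quasi-Helmholtz decomposition has no harmonic part). Gram matrices (all symmetric positive definite): $[\mathsf{G}]_{mn}=\langle\mathbf{f}_m,\mathbf{f}_n\rangle$ for the RWG basis functions $\mathbf{f}_n$ associated with the edges; $[\mathbb{G}]_{mn}=\langle\mathbf{g}_m,\mathbf{g}_n\rangle$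 for the dual (Buffa–Christiansen) edge functions $\mathbf{g}_n$; $[\mathsf{G}_p]_{mn}=\langle p_m,p_n\rangle$ with $p_m=1/A_m$ on triangle $c_m$ (area $A_m$) and $0$ elsewhere; $[\mathsf{G}_\lambda]_{mn}=\langle\lambda_m,\lambda_n\rangle$ for the piecewise-linear hat (pyramid) functions $\lambda_m$ at the vertices; $\mathbb{G}_{\tilde p}$ and $\mathbb{G}_{\tilde\lambda}$ are the Gram matrices of the dual patch functions (one per vertex) and dual pyramid functions (one per triangle) on the barycentric refinement. $\langle a,b\rangle=\int_\Gamma a\cdot b\,dS$. Matrix square roots are the symmetric positive definite ones; $^+$ is the Moore–Penrose pseudo-inverse. *)

theory Defs
  imports "HOL-Analysis.Analysis"
begin

definition sym_mat :: "real^'n^'n \<Rightarrow> bool" where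
  "sym_mat A \<longleftrightarrow> transpose A = A"

definition spd :: "real^'n^'n \<Rightarrow> bool" where
  "spd A \<longleftrightarrow> sym_mat A \<and> (\<forall>x. x \<noteq> 0 \<longrightarrow> x \<bullet> (A *v x) > 0)"

definition mat_sqrt :: "real^'n^'n \<Rightarrow> real^'n^'n" where
  "mat_sqrt A = (THE S. spd S \<and> S ** S = A)"

definition mat_inv_sqrt :: "real^'n^'n \<Rightarrow> real^'n^'n" where
  "mat_inv_sqrt A = matrix_inv (mat_sqrt A)"

definition pinv :: "real^'n^'m \<Rightarrow> real^'m^'n" where
  "pinv A = (THE X. A ** X ** A = A \<and> X ** A ** X = X \<and>
                    transpose (A ** X) = A ** X \<and> transpose (X ** A) = X ** A)"

definition proj :: "real^'n^'m \<Rightarrow> real^'m^'m" where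
  "proj A = A ** pinv (transpose A ** A) ** transpose A"

end

theory Submission
  imports Defs
begin

text \<open>
  Both identities have the form \<open>proj (U ** Lambda ** K) + proj (V ** Sigma ** T) = mat 1\<close>
  with \<open>transpose U ** V = mat 1\<close> and \<open>K\<close>, \<open>T\<close> invertible: \<open>U = mat_sqrt G\<close>,
  \<open>V = mat_inv_sqrt G\<close> for the primal normalisation, and the roles of the two swapped for the
  dual one. Since \<open>transpose Sigma ** Lambda = 0\<close>, the ranges of the two normalised matrices are
  orthogonal, and since \<open>Sigma\<close> and \<open>Lambda\<close> together span, they are orthogonal
  complements. As \<open>A (A\<^sup>T A)\<^sup>+ A\<^sup>T\<close> is the orthogonal projector onto the range of \<open>A\<close>,
  the two projectors add up to the identity.

  The spectral theorem for real symmetric matrices, obtained by maximising the quadratic form on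
  the unit sphere of invariant subspaces, yields the symmetric positive definite square root
  (applying \<open>sqrt\<close> to the eigenvalues) and the Moore--Penrose inverse of a symmetric matrix
  (applying \<open>inverse\<close>, with \<open>inverse 0 = 0\<close>).
\<close>

section \<open>The spectral theorem for symmetric matrices\<close>

lemma sym_mat_inner_commute:
  fixes M :: "real^'n^'n"
  assumes "sym_mat M"
  shows "x \<bullet> (M *v y) = (M *v x) \<bullet> y"
proof -
  have "x \<bullet> (M *v y) = (transpose M *v x) \<bullet> y" by (simp add: dot_lmul_matrix)
  with assms show ?thesis by (simp add: sym_mat_def)
qed

lemma quadratic_form_le_max_on_sphere:
  fixes M :: "real^'n^'n"
  assumes V: "subspace V" and v: "v \<in> V" "norm v = 1"
    and max: "\<forall>y\<in>V \<inter> sphere 0 1. y \<bullet> (M *v y) \<le> v \<bullet> (M *v v)"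
    and y: "y \<in> V"
  shows "y \<bullet> (M *v y) \<le> (v \<bullet> (M *v v)) * (y \<bullet> y)"
proof (cases "y = 0")
  case False
  define r where "r = norm y"
  have r: "r > 0" using False by (simp add: r_def)
  define z where "z = inverse r *\<^sub>R y"
  have "z \<in> V \<inter> sphere 0 1" using V y r by (simp add: z_def r_def subspace_scale)
  with max have le: "z \<bullet> (M *v z) \<le> v \<bullet> (M *v v)" by blast
  have "y \<bullet> (M *v y) = (r * r) * (z \<bullet> (M *v z))"
    using r by (simp add: z_def matrix_vector_mult_scaleR field_simps)
  also have "\<dots> \<le> (r * r) * (v \<bullet> (M *v v))"
    using le by (simp add: mult_left_mono)
  also have "r * r = y \<bullet> y" by (simp add: r_def dot_square_norm power2_eq_square)
  finally show ?thesis by (simp add: mult.commute)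
qed simp

lemma linear_le_quadratic_imp_zero:
  fixes a C :: real
  assumes le: "\<And>t. 2 * t * a \<le> t * t * C"
  shows "a = 0"
proof (rule ccontr)
  assume "a \<noteq> 0"
  define t where "t = a / (\<bar>C\<bar> + 1)"
  have ta: "t * a > 0"
    using \<open>a \<noteq> 0\<close> by (auto simp: t_def zero_less_mult_iff intro!: divide_pos_pos)
  have "2 * (t * a) \<le> t * t * C" using le[of t] by (simp add: mult.assoc)
  also have "\<dots> \<le> t * t * \<bar>C\<bar>" by (simp add: mult_left_mono)
  also have "\<dots> = (t * a) * (\<bar>C\<bar> / (\<bar>C\<bar> + 1))" by (simp add: t_def field_simps)
  also have "\<dots> < (t * a) * 1" using ta by (intro mult_strict_left_mono) simp_all
  finally show False using ta by linarith
qed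

text \<open>Comparing the maximiser \<open>v\<close> with \<open>v + t w\<close>, where \<open>w\<close> is the component of \<open>M v\<close>
  orthogonal to \<open>v\<close>, gives \<open>2 t \<bar>w\<bar>\<^sup>2 \<le> O(t\<^sup>2)\<close> for all \<open>t\<close>, hence \<open>w = 0\<close>.\<close>
lemma rayleigh_maximiser_eigenvector:
  fixes M :: "real^'n^'n"
  assumes sym: "sym_mat M" and V: "subspace V" and inv: "\<forall>x\<in>V. M *v x \<in> V"
    and v: "v \<in> V" "norm v = 1"
    and max: "\<forall>y\<in>V \<inter> sphere 0 1. y \<bullet> (M *v y) \<le> v \<bullet> (M *v v)"
  shows "M *v v = (v \<bullet> (M *v v)) *\<^sub>R v"
proof -
  have vv: "v \<bullet> v = 1" using v by (simp add: dot_square_norm)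
  define l where "l = v \<bullet> (M *v v)"
  define w where "w = M *v v - l *\<^sub>R v"
  have wV: "w \<in> V" unfolding w_def using inv v V by (simp add: subspace_diff subspace_scale)
  have wv: "w \<bullet> v = 0"
    using vv by (simp add: w_def l_def inner_diff_left inner_commute[of "M *v v" v])
  have wMv: "w \<bullet> (M *v v) = w \<bullet> w"
    using wv by (simp add: w_def l_def inner_diff_right inner_diff_left inner_commute)
  have vMw: "v \<bullet> (M *v w) = w \<bullet> w"
    using sym_mat_inner_commute[OF sym, of v w] wMv by (simp add: inner_commute)
  define a where "a = w \<bullet> w"
  define c where "c = w \<bullet> (M *v w)"
  have "2 * t * a \<le> t * t * (l * a - c)" for t
  proof -
    have "v + t *\<^sub>R w \<in> V" using v wV V by (simp add: subspace_add subspace_scale)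
    from quadratic_form_le_max_on_sphere[OF V v max this]
    have le: "(v + t *\<^sub>R w) \<bullet> (M *v (v + t *\<^sub>R w)) \<le> l * ((v + t *\<^sub>R w) \<bullet> (v + t *\<^sub>R w))"
      by (simp add: l_def)
    have form: "(v + t *\<^sub>R w) \<bullet> (M *v (v + t *\<^sub>R w)) = l + 2 * t * a + t * t * c"
      using vMw wMv unfolding l_def a_def c_def
      by (simp add: matrix_vector_right_distrib matrix_vector_mult_scaleR inner_add_left
          inner_add_right algebra_simps)
    have norm: "(v + t *\<^sub>R w) \<bullet> (v + t *\<^sub>R w) = 1 + t * t * a"
      using vv wv unfolding a_def by (simp add: inner_add_left inner_add_right inner_commute algebra_simps)
    show ?thesis using le unfolding form norm by (simp add: algebra_simps)
  qed
  hence "a = 0" by (rule linear_le_quadratic_imp_zero)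
  hence "w = 0" by (simp add: a_def)
  thus ?thesis by (simp add: w_def l_def)
qed

lemma sym_mat_unit_eigenvector:
  fixes M :: "real^'n^'n"
  assumes sym: "sym_mat M" and V: "subspace V" and inv: "\<forall>x\<in>V. M *v x \<in> V"
    and nontrivial: "V \<noteq> {0}"
  shows "\<exists>v\<in>V. norm v = 1 \<and> M *v v = (v \<bullet> (M *v v)) *\<^sub>R v"
proof -
  let ?K = "V \<inter> sphere (0::real^'n) 1"
  have "compact ?K" using closed_subspace[OF V] by (intro closed_Int_compact) auto
  moreover obtain x where x: "x \<in> V" "x \<noteq> 0" using nontrivial V subspace_0 by blast
  then have "(1 / norm x) *\<^sub>R x \<in> ?K" using V by (simp add: subspace_scale)
  then have "?K \<noteq> {}" by blast
  moreover have "continuous_on ?K (\<lambda>y. y \<bullet> (M *v y))"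
    by (intro continuous_intros linear_continuous_on matrix_vector_mul_linear)
  ultimately obtain v where "v \<in> ?K" and "\<forall>y\<in>?K. y \<bullet> (M *v y) \<le> v \<bullet> (M *v v)"
    using continuous_attains_sup by blast
  with rayleigh_maximiser_eigenvector[OF sym V inv] show ?thesis by auto
qed

lemma sym_mat_orthonormal_eigenbasis_subspace:
  fixes M :: "real^'n^'n"
  assumes sym: "sym_mat M" and "subspace V" and "\<forall>x\<in>V. M *v x \<in> V"
  shows "\<exists>B. finite B \<and> B \<subseteq> V \<and> (\<forall>b\<in>B. norm b = 1) \<and> pairwise orthogonal B \<and> span B = V
      \<and> (\<forall>b\<in>B. M *v b = (b \<bullet> (M *v b)) *\<^sub>R b)"
  using assms(2,3)
proof (induction "dim V" arbitrary: V rule: less_induct)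
  case less
  show ?case
  proof (cases "V = {0}")
    case True
    then show ?thesis by (intro exI[of _ "{}"]) auto
  next
    case False
    obtain v where v: "v \<in> V" "norm v = 1" "M *v v = (v \<bullet> (M *v v)) *\<^sub>R v"
      using sym_mat_unit_eigenvector[OF sym less.prems False] by blast
    have vv: "v \<bullet> v = 1" using v by (simp add: dot_square_norm)
    define W where "W = {x\<in>V. v \<bullet> x = 0}"
    have W: "subspace W" using less.prems(1) unfolding W_def subspace_def
      by (auto simp: inner_add_right)
    have "\<forall>x\<in>W. M *v x \<in> W"
    proof
      fix x assume x: "x \<in> W"
      have "v \<bullet> (M *v x) = (v \<bullet> (M *v v)) * (v \<bullet> x)"
        using sym_mat_inner_commute[OF sym, of v x] v(3) by (metis inner_scaleR_left)
      then show "M *v x \<in> W" using x less.prems(2) by (simp add: W_def)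
    qed
    moreover have "dim W < dim V"
    proof -
      have "v \<in> V - W" using v vv by (simp add: W_def)
      moreover have "W \<subseteq> V" by (auto simp: W_def)
      ultimately have "W \<subset> V" by blast
      moreover have "span W = W" "span V = V" using W less.prems(1) by (simp_all add: span_eq_iff)
      ultimately have "span W \<subset> span V" by (simp only:)
      then show ?thesis by (rule dim_psubset)
    qed
    ultimately obtain B where B:
      "finite B" "B \<subseteq> W" "\<forall>b\<in>B. norm b = 1" "pairwise orthogonal B" "span B = W"
      "\<forall>b\<in>B. M *v b = (b \<bullet> (M *v b)) *\<^sub>R b"
      using less.hyps[OF _ W] by blast
    have orth: "\<forall>b\<in>B. orthogonal v b \<and> orthogonal b v"
      using B(2) by (auto simp: W_def orthogonal_def inner_commute)
    have "span (insert v B) = V"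
    proof
      show "span (insert v B) \<subseteq> V"
        using B(2) v less.prems(1) by (intro span_minimal) (auto simp: W_def)
      show "V \<subseteq> span (insert v B)"
      proof
        fix x assume x: "x \<in> V"
        have "x - (v \<bullet> x) *\<^sub>R v \<in> W" using x v vv less.prems(1)
          by (auto simp: W_def subspace_diff subspace_scale inner_diff_right)
        thus "x \<in> span (insert v B)" unfolding span_breakdown_eq B(5) by blast
      qed
    qed
    moreover have "pairwise orthogonal (insert v B)" using B(4) orth by (simp add: pairwise_insert)
    ultimately show ?thesis using B v by (intro exI[of _ "insert v B"]) (auto simp: W_def)
  qed
qed

lemma matrix_eq_on_spanning_set:
  fixes P Q :: "real^'n^'n"
  assumes "span B = UNIV" and "\<forall>b\<in>B. P *v b = Q *v b"
  shows "P = Q"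
proof -
  have "P *v x = Q *v x" for x
    by (rule linear_eq_on_span[where B=B, OF matrix_vector_mul_linear matrix_vector_mul_linear])
       (use assms in auto)
  thus ?thesis by (simp add: matrix_eq)
qed

definition spectral_matrix :: "(real^'n) set \<Rightarrow> (real^'n \<Rightarrow> real) \<Rightarrow> real^'n^'n" where
  "spectral_matrix B w = (\<chi> i j. \<Sum>b\<in>B. w b * b$i * b$j)"

lemma spectral_matrix_mult_vec:
  "spectral_matrix B w *v x = (\<Sum>b\<in>B. (w b * (b \<bullet> x)) *\<^sub>R b)"
proof -
  have "(spectral_matrix B w *v x) $ i = (\<Sum>b\<in>B. (w b * (b \<bullet> x)) *\<^sub>R b) $ i" for i
  proof -
    have "(spectral_matrix B w *v x) $ i = (\<Sum>j\<in>UNIV. \<Sum>b\<in>B. w b * b$i * (b$j * x$j))"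
      by (simp add: spectral_matrix_def matrix_vector_mult_def sum_distrib_right mult.assoc)
    also have "\<dots> = (\<Sum>b\<in>B. \<Sum>j\<in>UNIV. w b * b$i * (b$j * x$j))"
      by (rule sum.swap)
    also have "\<dots> = (\<Sum>b\<in>B. (w b * (b \<bullet> x)) *\<^sub>R b) $ i"
      by (simp add: inner_vec_def sum_distrib_left sum_component mult_ac)
    finally show ?thesis .
  qed
  thus ?thesis by (simp add: vec_eq_iff)
qed

lemma spectral_matrix_cong: "(\<And>b. b \<in> B \<Longrightarrow> w b = u b) \<Longrightarrow> spectral_matrix B w = spectral_matrix B u"
  by (simp add: spectral_matrix_def vec_eq_iff)

lemma sym_mat_spectral_matrix: "sym_mat (spectral_matrix B w)"
  by (simp add: sym_mat_def spectral_matrix_def transpose_def vec_eq_iff mult_ac)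

locale orthonormal_basis =
  fixes B :: "(real^'n) set"
  assumes finite: "finite B" and unit: "\<forall>b\<in>B. norm b = 1" and orthogonal: "pairwise orthogonal B"
    and spanning: "span B = UNIV"
begin

lemma nonzero: "b \<in> B \<Longrightarrow> b \<noteq> 0"
  using unit by auto

lemma spectral_matrix_mult_basis:
  assumes c: "c \<in> B"
  shows "spectral_matrix B w *v c = w c *\<^sub>R c"
proof -
  have "spectral_matrix B w *v c
      = (w c * (c \<bullet> c)) *\<^sub>R c + (\<Sum>b\<in>B-{c}. (w b * (b \<bullet> c)) *\<^sub>R b)"
    unfolding spectral_matrix_mult_vec using finite c by (simp add: sum.remove)
  also have "(\<Sum>b\<in>B-{c}. (w b * (b \<bullet> c)) *\<^sub>R b) = 0"
    using orthogonal c by (intro sum.neutral) (auto simp: pairwise_def orthogonal_def)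
  also have "c \<bullet> c = 1" using unit c by (simp add: dot_square_norm)
  finally show ?thesis by simp
qed

lemma spectral_matrix_eqI: "\<forall>b\<in>B. M *v b = w b *\<^sub>R b \<Longrightarrow> M = spectral_matrix B w"
  by (rule matrix_eq_on_spanning_set[OF spanning]) (simp add: spectral_matrix_mult_basis)

lemma spectral_matrix_mult:
  "spectral_matrix B w ** spectral_matrix B u = spectral_matrix B (\<lambda>b. w b * u b)"
  by (rule spectral_matrix_eqI)
     (simp add: spectral_matrix_mult_basis matrix_vector_mul_assoc[symmetric] matrix_vector_mult_scaleR)

lemma spd_spectral_matrix:
  assumes pos: "\<forall>b\<in>B. w b > 0"
  shows "spd (spectral_matrix B w)"
  unfolding spd_def
proof (intro conjI allI impI sym_mat_spectral_matrix)
  fix x :: "real^'n" assume "x \<noteq> 0"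
  have "\<exists>c\<in>B. c \<bullet> x \<noteq> 0"
  proof (rule ccontr)
    assume "\<not> ?thesis"
    hence "orthogonal x x"
      using orthogonal_to_span[of x B x] spanning by (auto simp: orthogonal_def inner_commute)
    thus False using \<open>x \<noteq> 0\<close> by (simp add: orthogonal_def)
  qed
  then obtain c where c: "c \<in> B" "c \<bullet> x \<noteq> 0" by blast
  have "0 < w c * (c \<bullet> x)\<^sup>2" using pos c by simp
  also have "\<dots> \<le> (\<Sum>b\<in>B. w b * (b \<bullet> x)\<^sup>2)"
    using pos c finite by (intro member_le_sum) (auto simp: less_imp_le)
  also have "\<dots> = x \<bullet> (spectral_matrix B w *v x)"
    by (simp add: spectral_matrix_mult_vec inner_sum_right power2_eq_square mult_ac inner_commute)
  finally show "x \<bullet> (spectral_matrix B w *v x) > 0" .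
qed

end

lemma sym_mat_spectral_decomposition:
  fixes M :: "real^'n^'n"
  assumes "sym_mat M"
  shows "\<exists>B. orthonormal_basis B \<and> M = spectral_matrix B (\<lambda>b. b \<bullet> (M *v b))"
proof -
  obtain B where B: "finite B" "\<forall>b\<in>B. norm b = 1" "pairwise orthogonal B" "span B = UNIV"
      "\<forall>b\<in>B. M *v b = (b \<bullet> (M *v b)) *\<^sub>R b"
    using sym_mat_orthonormal_eigenbasis_subspace[OF assms, of UNIV] by auto
  then interpret orthonormal_basis B by unfold_locales
  have "M = spectral_matrix B (\<lambda>b. b \<bullet> (M *v b))" using B(5) by (intro spectral_matrix_eqI) simp
  with orthonormal_basis_axioms show ?thesis by blast
qed

section \<open>Square roots and inverses of positive definite matrices\<close>

lemma spd_sqrt_exists: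
  fixes M :: "real^'n^'n"
  assumes "spd M"
  shows "\<exists>S. spd S \<and> S ** S = M"
proof -
  obtain B where B: "orthonormal_basis B" and M: "M = spectral_matrix B (\<lambda>b. b \<bullet> (M *v b))"
    using sym_mat_spectral_decomposition assms by (auto simp: spd_def)
  interpret orthonormal_basis B by (rule B)
  have pos: "\<forall>b\<in>B. b \<bullet> (M *v b) > 0"
    using assms nonzero by (simp add: spd_def)
  define S where "S = spectral_matrix B (\<lambda>b. sqrt (b \<bullet> (M *v b)))"
  have "spd S" unfolding S_def using pos by (intro spd_spectral_matrix) auto
  moreover have "S ** S = M"
  proof -
    have "S ** S = spectral_matrix B (\<lambda>b. b \<bullet> (M *v b))"
      unfolding S_def spectral_matrix_mult using pos by (intro spectral_matrix_cong) auto
    also have "\<dots> = M" by (rule M[symmetric])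
    finally show ?thesis .
  qed
  ultimately show ?thesis by blast
qed

text \<open>If \<open>S\<^sup>2 = T\<^sup>2\<close>, then \<open>S D + D T = 0\<close> for \<open>D = S - T\<close>; testing this against an
  eigenvector \<open>b\<close> of the symmetric matrix \<open>D\<close> with eigenvalue \<open>d\<close> gives
  \<open>d (b\<bullet>S b + b\<bullet>T b) = 0\<close>, so \<open>d = 0\<close>.\<close>
lemma spd_sqrt_unique:
  fixes S T :: "real^'n^'n"
  assumes S: "spd S" and T: "spd T" and eq: "S ** S = T ** T"
  shows "S = T"
proof -
  define D where "D = S - T"
  have symD: "sym_mat D" using S T by (simp add: D_def spd_def sym_mat_def transpose_def vec_eq_iff)
  obtain B where B: "orthonormal_basis B" and D: "D = spectral_matrix B (\<lambda>b. b \<bullet> (D *v b))"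
    using sym_mat_spectral_decomposition[OF symD] by blast
  interpret orthonormal_basis B by (rule B)
  have "D *v b = 0 *v b" if b: "b \<in> B" for b
  proof -
    define d where "d = b \<bullet> (D *v b)"
    have Db: "D *v b = d *\<^sub>R b"
      using spectral_matrix_mult_basis[OF b, of "\<lambda>b. b \<bullet> (D *v b)"] unfolding D[symmetric] d_def .
    have "S *v (S *v b) = T *v (T *v b)" using eq by (simp add: matrix_vector_mul_assoc)
    hence "S *v (D *v b) + D *v (T *v b) = 0"
      by (simp add: D_def matrix_vector_mult_diff_rdistrib matrix_vector_mult_diff_distrib)
    hence "b \<bullet> (S *v (D *v b)) + b \<bullet> (D *v (T *v b)) = 0"
      by (simp flip: inner_add_right)
    moreover have "b \<bullet> (D *v (T *v b)) = d * (b \<bullet> (T *v b))"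
      using sym_mat_inner_commute[OF symD, of b "T *v b"] Db by simp
    ultimately have "d * (b \<bullet> (S *v b) + b \<bullet> (T *v b)) = 0"
      using Db by (simp add: matrix_vector_mult_scaleR algebra_simps)
    moreover have "b \<bullet> (S *v b) + b \<bullet> (T *v b) > 0"
      using S T nonzero[OF b] by (simp add: spd_def add_pos_pos)
    ultimately show ?thesis using Db by simp
  qed
  hence "D = 0" using matrix_eq_on_spanning_set[OF spanning] by blast
  thus ?thesis by (simp add: D_def)
qed

lemma spd_mat_sqrt:
  fixes M :: "real^'n^'n"
  assumes "spd M"
  shows "spd (mat_sqrt M)"
proof -
  obtain S where S: "spd S" "S ** S = M" using spd_sqrt_exists[OF assms] by blast
  have "mat_sqrt M = S" unfolding mat_sqrt_def
  proof (rule the_equality)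
    show "spd S \<and> S ** S = M" using S by simp
    show "R = S" if "spd R \<and> R ** R = M" for R
      using that S spd_sqrt_unique[of R S] by simp
  qed
  with S show ?thesis by simp
qed

lemma spd_invertible:
  fixes M :: "real^'n^'n"
  assumes "spd M"
  shows "invertible M"
proof -
  have "x = 0" if "M *v x = 0" for x
  proof -
    from that have "\<not> x \<bullet> (M *v x) > 0" by simp
    with assms show "x = 0" unfolding spd_def by blast
  qed
  then obtain L where "L ** M = mat 1" using matrix_left_invertible_ker by blast
  thus ?thesis using invertible_left_inverse by blast
qed

lemma matrix_inv_inverse:
  fixes M :: "real^'n^'n"
  assumes "invertible M"
  shows "M ** matrix_inv M = mat 1 \<and> matrix_inv M ** M = mat 1"
  using assms unfolding invertible_def matrix_inv_def by (rule someI_ex)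

lemma invertible_mat_sqrt: "spd M \<Longrightarrow> invertible (mat_sqrt M)"
  by (intro spd_invertible spd_mat_sqrt)

lemma invertible_mat_inv_sqrt: "spd M \<Longrightarrow> invertible (mat_inv_sqrt M)"
  using matrix_inv_inverse[OF invertible_mat_sqrt] unfolding mat_inv_sqrt_def invertible_def by blast

lemma transpose_mat_sqrt_mult_inv_sqrt:
  fixes M :: "real^'n^'n"
  assumes "spd M"
  shows "transpose (mat_sqrt M) ** mat_inv_sqrt M = mat 1"
    and "transpose (mat_inv_sqrt M) ** mat_sqrt M = mat 1"
proof -
  have sym: "transpose (mat_sqrt M) = mat_sqrt M"
    using spd_mat_sqrt[OF assms] by (simp add: spd_def sym_mat_def)
  show 1: "transpose (mat_sqrt M) ** mat_inv_sqrt M = mat 1"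
    using matrix_inv_inverse[OF invertible_mat_sqrt[OF assms]] by (simp add: sym mat_inv_sqrt_def)
  show "transpose (mat_inv_sqrt M) ** mat_sqrt M = mat 1"
    using arg_cong[OF 1, of transpose] by (simp add: matrix_transpose_mul sym)
qed

section \<open>The Moore--Penrose inverse and orthogonal projectors\<close>

definition penrose_conditions :: "real^'n^'m \<Rightarrow> real^'m^'n \<Rightarrow> bool" where
  "penrose_conditions A X \<longleftrightarrow> A ** X ** A = A \<and> X ** A ** X = X \<and>
     transpose (A ** X) = A ** X \<and> transpose (X ** A) = X ** A"

lemma penrose_conditions_unique:
  assumes X: "penrose_conditions A X" and Y: "penrose_conditions A Y"
  shows "X = Y"
proof -
  have x1: "A ** X ** A = A" and x2: "X ** A ** X = X" and x3: "transpose (A ** X) = A ** X"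
    and x4: "transpose (X ** A) = X ** A" using X by (auto simp: penrose_conditions_def)
  have y1: "A ** Y ** A = A" and y2: "Y ** A ** Y = Y" and y3: "transpose (A ** Y) = A ** Y"
    and y4: "transpose (Y ** A) = Y ** A" using Y by (auto simp: penrose_conditions_def)
  have "transpose A = transpose (A ** Y ** A)" using y1 by simp
  also have "\<dots> = transpose A ** transpose (A ** Y)" by (simp add: matrix_transpose_mul)
  finally have AY: "transpose A = transpose A ** (A ** Y)" using y3 by simp
  have "transpose A = transpose (A ** X ** A)" using x1 by simp
  also have "\<dots> = transpose (X ** A) ** transpose A" by (simp add: matrix_transpose_mul matrix_mul_assoc)
  finally have XA: "transpose A = (X ** A) ** transpose A" using x4 by simp
  have "X = X ** transpose (A ** X)" using x2 x3 by (simp add: matrix_mul_assoc)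
  also have "\<dots> = X ** transpose X ** transpose A" by (simp add: matrix_transpose_mul matrix_mul_assoc)
  also have "\<dots> = X ** transpose X ** (transpose A ** (A ** Y))" using AY by simp
  also have "\<dots> = X ** transpose (A ** X) ** (A ** Y)" by (simp add: matrix_transpose_mul matrix_mul_assoc)
  also have "\<dots> = X ** A ** Y" using x2 x3 by (simp add: matrix_mul_assoc)
  finally have XAY: "X = X ** A ** Y" .
  have "Y = transpose (Y ** A) ** Y" using y2 y4 by simp
  also have "\<dots> = transpose A ** transpose Y ** Y" by (simp add: matrix_transpose_mul)
  also have "\<dots> = (X ** A) ** transpose A ** transpose Y ** Y" using XA by simp
  also have "\<dots> = X ** A ** transpose (Y ** A) ** Y" by (simp add: matrix_transpose_mul matrix_mul_assoc)
  also have "\<dots> = X ** A ** (Y ** A ** Y)" using y4 by (simp add: matrix_mul_assoc)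
  also have "\<dots> = X ** A ** Y" using y2 by simp
  finally show ?thesis using XAY by simp
qed

lemma pinv_eqI:
  assumes "penrose_conditions A X"
  shows "pinv A = X"
proof -
  have "pinv A = (THE X. penrose_conditions A X)" by (simp add: pinv_def penrose_conditions_def)
  also have "\<dots> = X"
    by (rule the_equality[where P = "penrose_conditions A", OF assms])
       (rule penrose_conditions_unique[OF _ assms])
  finally show ?thesis .
qed

lemma pinv_sym_mat:
  fixes M :: "real^'n^'n"
  assumes "sym_mat M"
  shows "penrose_conditions M (pinv M)" and "sym_mat (pinv M)"
proof -
  obtain B where B: "orthonormal_basis B" and M: "M = spectral_matrix B (\<lambda>b. b \<bullet> (M *v b))"
    using sym_mat_spectral_decomposition[OF assms] by blast
  interpret orthonormal_basis B by (rule B)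
  define w where "w = (\<lambda>b. b \<bullet> (M *v b))"
  have Mw: "M = spectral_matrix B w" unfolding w_def by (rule M)
  define X where "X = spectral_matrix B (\<lambda>b. inverse (w b))"
  have scalar: "x * inverse x * x = x" "inverse x * x * inverse x = inverse x" for x :: real
    by (cases "x = 0"; simp)+
  have "(\<lambda>b. w b * inverse (w b) * w b) = w"
    and "(\<lambda>b. inverse (w b) * w b * inverse (w b)) = (\<lambda>b. inverse (w b))"
    by (simp_all only: scalar)
  then have "penrose_conditions M X"
    unfolding penrose_conditions_def Mw X_def spectral_matrix_mult
      sym_mat_spectral_matrix[unfolded sym_mat_def] by (simp only: simp_thms)
  moreover from this have "pinv M = X" by (rule pinv_eqI)
  ultimately show "penrose_conditions M (pinv M)" and "sym_mat (pinv M)"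
    by (simp_all add: X_def sym_mat_spectral_matrix)
qed

lemma transpose_0 [simp]: "transpose 0 = 0"
  by (simp add: transpose_def vec_eq_iff)

lemma sym_mat_gram: "sym_mat (transpose A ** A)"
  by (simp add: sym_mat_def matrix_transpose_mul)

lemma gram_mult_vec_eq_0D:
  fixes A :: "real^'n^'m"
  assumes "transpose A *v (A *v z) = 0"
  shows "A *v z = 0"
proof -
  have "(A *v z) \<bullet> (A *v z) = (z v* transpose A) \<bullet> (A *v z)" by simp
  also have "\<dots> = z \<bullet> (transpose A *v (A *v z))" by (rule dot_lmul_matrix)
  finally show ?thesis using assms by simp
qed

lemma mult_pinv_gram:
  fixes A :: "real^'n^'m"
  shows "A ** pinv (transpose A ** A) ** (transpose A ** A) = A"
proof -
  define M where "M = transpose A ** A"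
  define X where "X = pinv M"
  have MXM: "M ** X ** M = M"
    using pinv_sym_mat(1)[OF sym_mat_gram[of A]] unfolding M_def X_def penrose_conditions_def
    by (rule conjunct1)
  have "(A ** X ** M) *v x = A *v x" for x
  proof -
    define z where "z = (X ** M) *v x - x"
    have "M *v z = 0" unfolding z_def
      using MXM by (simp add: matrix_vector_mult_diff_distrib matrix_vector_mul_assoc matrix_mul_assoc)
    then have "transpose A *v (A *v z) = 0" unfolding M_def by (simp add: matrix_vector_mul_assoc)
    then have "A *v z = 0" by (rule gram_mult_vec_eq_0D)
    then show ?thesis unfolding z_def
      by (simp add: matrix_vector_mult_diff_distrib matrix_vector_mul_assoc matrix_mul_assoc)
  qed
  then have "A ** X ** M = A" by (simp add: matrix_eq)
  then show ?thesis by (simp only: X_def M_def)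
qed

lemma proj_mult: "proj A ** A = A"
  using mult_pinv_gram[of A] by (simp add: proj_def matrix_mul_assoc)

lemma transpose_mult_proj: "transpose A ** proj A = transpose A"
proof -
  have "transpose (pinv (transpose A ** A)) = pinv (transpose A ** A)"
    using pinv_sym_mat(2)[OF sym_mat_gram] by (simp add: sym_mat_def)
  then have "transpose A ** proj A = transpose (A ** pinv (transpose A ** A) ** (transpose A ** A))"
    by (simp add: proj_def matrix_transpose_mul matrix_mul_assoc)
  then show ?thesis by (simp add: mult_pinv_gram)
qed

lemma proj_add_proj_complement:
  fixes A :: "real^'a^'e" and B :: "real^'b^'e"
  assumes orth: "transpose A ** B = 0"
    and compl: "\<forall>q. transpose A *v q = 0 \<longrightarrow> (\<exists>t. q = B *v t)"
  shows "proj A + proj B = mat 1"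
proof -
  have "(proj A + proj B) *v x = x" for x
  proof -
    define s where "s = (pinv (transpose A ** A) ** transpose A) *v x"
    have PA: "proj A *v x = A *v s"
      by (simp add: s_def proj_def matrix_vector_mul_assoc matrix_mul_assoc)
    have "transpose A *v (x - proj A *v x) = 0"
      using transpose_mult_proj[of A]
      by (simp add: matrix_vector_mult_diff_distrib matrix_vector_mul_assoc)
    then obtain t where t: "x - proj A *v x = B *v t" using compl by blast
    have "proj B ** A = B ** pinv (transpose B ** B) ** (transpose B ** A)"
      by (simp add: proj_def matrix_mul_assoc)
    also have "transpose B ** A = 0"
      using arg_cong[OF orth, of transpose] by (simp add: matrix_transpose_mul)
    finally have "proj B ** A = 0" by simp
    then have "proj B *v (A *v s) = 0"
      by (simp add: matrix_vector_mul_assoc)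
    moreover have "proj B *v (B *v t) = B *v t"
      by (simp add: matrix_vector_mul_assoc proj_mult)
    moreover have x: "x = A *v s + B *v t" using PA t by (simp add: algebra_simps)
    ultimately have "proj B *v x = B *v t"
      by (simp add: matrix_vector_right_distrib)
    with PA x show ?thesis by (simp add: matrix_vector_mult_add_rdistrib)
  qed
  then show ?thesis by (simp add: matrix_eq)
qed

section \<open>Complementarity of the normalised Loop and Star projectors\<close>

lemma kernel_transpose_in_range:
  fixes A :: "real^'a^'e" and B :: "real^'b^'e"
  assumes orth: "transpose A ** B = 0" and span: "\<forall>v. \<exists>s l. v = A *v s + B *v l"
    and y: "transpose B *v y = 0"
  shows "\<exists>s. y = A *v s"
proof -
  obtain s l where sl: "y = A *v s + B *v l" using span by blast
  have "transpose B ** A = 0" using arg_cong[OF orth, of transpose] by (simp add: matrix_transpose_mul)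
  then have "transpose B *v (A *v s) = 0" by (simp add: matrix_vector_mul_assoc)
  then have "transpose B *v (B *v l) = 0" using y sl by (simp add: matrix_vector_right_distrib)
  then have "B *v l = 0" by (rule gram_mult_vec_eq_0D)
  with sl show ?thesis by auto
qed

lemma proj_normalised_loop_add_star:
  fixes Sigma :: "real^'s::finite^'e::finite" and Lambda :: "real^'l::finite^'e"
    and U V :: "real^'e^'e" and K :: "real^'l^'l" and T :: "real^'s^'s"
  assumes orth: "transpose Sigma ** Lambda = 0" and span: "\<forall>v. \<exists>s l. v = Sigma *v s + Lambda *v l"
    and UV: "transpose U ** V = mat 1"
    and K: "invertible K" and T: "invertible T"
  shows "proj (U ** Lambda ** K) + proj (V ** Sigma ** T) = mat 1"
proof (rule proj_add_proj_complement)
  have "transpose (U ** Lambda ** K) ** (V ** Sigma ** T)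
      = transpose K ** transpose Lambda ** (transpose U ** V) ** Sigma ** T"
    by (simp add: matrix_transpose_mul matrix_mul_assoc)
  also have "\<dots> = transpose K ** transpose (transpose Sigma ** Lambda) ** T"
    using UV by (simp add: matrix_transpose_mul matrix_mul_assoc)
  finally show "transpose (U ** Lambda ** K) ** (V ** Sigma ** T) = 0" using orth by simp
  show "\<forall>q. transpose (U ** Lambda ** K) *v q = 0 \<longrightarrow> (\<exists>t. q = V ** Sigma ** T *v t)"
  proof (intro allI impI)
    fix q assume "transpose (U ** Lambda ** K) *v q = 0"
    then have "transpose K *v (transpose Lambda *v (transpose U *v q)) = 0"
      by (simp only: matrix_transpose_mul matrix_vector_mul_assoc matrix_mul_assoc)
    then have "transpose Lambda *v (transpose U *v q) = 0"
      using inj_matrix_vector_mult[of "transpose K"] K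
      by (metis injD matrix_vector_mult_0_right transpose_invertible)
    then obtain s where s: "transpose U *v q = Sigma *v s"
      using kernel_transpose_in_range[OF orth span] by blast
    have "V ** transpose U = mat 1" using UV matrix_left_right_inverse by blast
    then have "q = V *v (Sigma *v s)"
      by (metis s matrix_vector_mul_assoc matrix_vector_mul_lid)
    also have "s = T *v (matrix_inv T *v s)"
      using matrix_inv_inverse[OF T] by (simp add: matrix_vector_mul_assoc)
    finally have "q = (V ** Sigma ** T) *v (matrix_inv T *v s)"
      by (simp only: matrix_vector_mul_assoc matrix_mul_assoc)
    then show "\<exists>t. q = V ** Sigma ** T *v t" by blast
  qed
qed

text \<open>Only the orthogonality \<open>orth\<close> and the spanning property \<open>span\<close> of the discrete
  quasi-Helmholtz decomposition enter the proof.\<close>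
theorem mainTheorem7:
  fixes Sigma :: "real^'s::finite^'e::finite"   \<comment> \<open>Star-to-RWG, N x N_S\<close>
    and Lambda :: "real^'l::finite^'e"            \<comment> \<open>Loop-to-RWG, N x N_L\<close>
    and G Gd :: "real^'e^'e"                      \<comment> \<open>RWG Gram G and dual (BC) Gram\<close>
    and Gp Gdlam :: "real^'s^'s"                  \<comment> \<open>G_p and dual-pyramid Gram (one per triangle)\<close>
    and Glam Gdp :: "real^'l^'l"                  \<comment> \<open>G_lambda and dual-patch Gram (one per vertex)\<close>
  assumes Sigma_entries: "\<forall>m n. Sigma $ m $ n \<in> {-1, 0, 1}"
      and Sigma_rows: "\<forall>m. (\<exists>!n. Sigma $ m $ n = 1) \<and> (\<exists>!n. Sigma $ m $ n = -1)"
      and Lambda_entries: "\<forall>m n. Lambda $ m $ n \<in> {-1, 0, 1}"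
      and Lambda_rows: "\<forall>m. (\<exists>!n. Lambda $ m $ n = 1) \<and> (\<exists>!n. Lambda $ m $ n = -1)"
      and orth: "transpose Sigma ** Lambda = 0"
      and span: "\<forall>v. \<exists>s l. v = Sigma *v s + Lambda *v l"
      and spd_G: "spd G" and spd_Gd: "spd Gd"
      and spd_Gp: "spd Gp" and spd_Gdlam: "spd Gdlam"
      and spd_Glam: "spd Glam" and spd_Gdp: "spd Gdp"
  shows "proj (mat_sqrt G ** Lambda ** mat_inv_sqrt Glam)
           + proj (mat_inv_sqrt G ** Sigma ** mat_sqrt Gp) = mat 1
       \<and> proj (mat_inv_sqrt Gd ** Lambda ** mat_sqrt Gdp)
           + proj (mat_sqrt Gd ** Sigma ** mat_inv_sqrt Gdlam) = mat 1"
proof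
  show "proj (mat_sqrt G ** Lambda ** mat_inv_sqrt Glam)
      + proj (mat_inv_sqrt G ** Sigma ** mat_sqrt Gp) = mat 1"
    by (rule proj_normalised_loop_add_star[OF orth span
          transpose_mat_sqrt_mult_inv_sqrt(1)[OF spd_G]
          invertible_mat_inv_sqrt[OF spd_Glam] invertible_mat_sqrt[OF spd_Gp]])
  show "proj (mat_inv_sqrt Gd ** Lambda ** mat_sqrt Gdp)
      + proj (mat_sqrt Gd ** Sigma ** mat_inv_sqrt Gdlam) = mat 1"
    by (rule proj_normalised_loop_add_star[OF orth span
          transpose_mat_sqrt_mult_inv_sqrt(2)[OF spd_Gd]
          invertible_mat_sqrt[OF spd_Gdp] invertible_mat_inv_sqrt[OF spd_Gdlam]])
qed

end
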